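(* Let $\xi=e^{i\pi/5}$, $\tau=\frac{1+\sqrt5}{2}$, $\tau'=\frac{1-\sqrt5}{2}$, and for $n\in\mathbb{N}$ let $Q_2(n)=\{\sum_{j=0}^9 n_j\xi^j: n_j\in\mathbb{N}_0,\ \sum_j n_j\le n\}$. Let $M=\{(x_1+\tau x_2)+(x_3+\tau x_4)\xi^4: x_i\in\mathbb{Z}\}$ and define $*:M\to\mathbb{C}$ by $\big((x_1+\tau x_2)+(x_3+\tau x_4)\xi^4\big)^*=(x_1+\tau' x_2)+(x_3+\tau' x_4)\xi^8$. Let $D(n)$ be the closed convex hull of the regular decagon with vertices $n\xi^j$, $j=0,\dots,9$, and $\Sigma(D(n))=\{x\in M: x^*\in D(n)\}$. Then $Q_2(n)\subset\Sigma(D(n))\cap D(n)$.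
   Context: $M=\mathbb{Z}[\tau]\{\xi^j\}$ is the $\mathbb{Z}[\tau]$-span of the tenth roots of unity, and $\Sigma(D(n))$ is the two-dimensional cut-and-project quasicrystal with acceptance window $D(n)$. *)

theory Defs
  imports "HOL-Analysis.Analysis"
begin

definition xi :: complex where "xi = exp (\<i> * of_real pi / 5)"

definition tau :: real where "tau = (1 + sqrt 5) / 2"

definition tau' :: real where "tau' = (1 - sqrt 5) / 2"

definition Q2 :: "nat \<Rightarrow> complex set" where
  "Q2 n = {\<Sum>j<10. of_nat (m j) * xi ^ j | m :: nat \<Rightarrow> nat. (\<Sum>j<10. m j) \<le> n}"

definition M :: "complex set" where
  "M = {complex_of_real (of_int x1 + tau * of_int x2)
        + complex_of_real (of_int x3 + tau * of_int x4) * xi ^ 4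
        | x1 x2 x3 x4 :: int. True}"

definition star :: "complex \<Rightarrow> complex" where
  "star z = (THE w. \<exists>x1 x2 x3 x4 :: int.
      z = complex_of_real (of_int x1 + tau * of_int x2)
          + complex_of_real (of_int x3 + tau * of_int x4) * xi ^ 4
    \<and> w = complex_of_real (of_int x1 + tau' * of_int x2)
          + complex_of_real (of_int x3 + tau' * of_int x4) * xi ^ 8)"

definition D :: "nat \<Rightarrow> complex set" where
  "D n = closure (convex hull {of_nat n * xi ^ j | j. j < (10::nat)})"

definition Sigma_win :: "complex set \<Rightarrow> complex set" where
  "Sigma_win W = {x \<in> M. star x \<in> W}"

end

theory Submission
  imports Defs "HOL-Computational_Algebra.Primes"
begin

text \<open>
  The set \<open>M\<close> is the ring \<open>\<int>[\<xi>]\<close>, and \<open>star\<close> is the restriction to \<open>M\<close> of the Galois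
  automorphism \<open>\<xi> \<mapsto> \<xi>\<^sup>7\<close> of \<open>\<rat>(\<xi>)\<close>: it maps \<open>\<xi>\<^sup>4\<close> to \<open>\<xi>\<^sup>2\<^sup>8 = \<xi>\<^sup>8\<close> and
  \<open>\<tau> = \<xi> - \<xi>\<^sup>4\<close> to \<open>\<xi>\<^sup>7 - \<xi>\<^sup>8 = \<tau>'\<close>. Hence \<open>star (\<Sum> m\<^sub>j \<xi>\<^sup>j) = \<Sum> m\<^sub>j \<xi>\<^sup>7\<^sup>j\<close> is again a sum of
  at most \<open>n\<close> tenth roots of unity, and every such sum lies in the convex set \<open>D n\<close>,
  which contains \<open>0\<close> and the points \<open>n \<xi>\<^sup>k\<close>.
\<close>

lemma xi_eq_cis: "xi = cis (pi / 5)"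
  unfolding xi_def cis_conv_exp by (simp add: mult.commute)

lemma xi_pow_5: "xi ^ 5 = -1"
  using Complex.DeMoivre[of "pi / 5" 5] by (simp add: xi_eq_cis)

lemma xi_pow_10: "xi ^ 10 = 1"
  using power_mult[of xi 5 2] by (simp add: xi_pow_5)

lemma xi_pow_mod_10: "xi ^ j = xi ^ (j mod 10)"
proof -
  have "xi ^ j = (xi ^ 10) ^ (j div 10) * xi ^ (j mod 10)"
    by (simp flip: power_mult power_add)
  then show ?thesis
    by (simp add: xi_pow_10)
qed

lemma xi_pow_4: "xi ^ 4 = - cnj xi"
proof -
  have "xi * cnj xi = 1"
    by (simp add: xi_eq_cis cis_cnj cis_mult)
  then have "xi ^ 4 = xi ^ 4 * (xi * cnj xi)"
    by simp
  also have "\<dots> = xi ^ 5 * cnj xi"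
    by algebra
  finally show ?thesis
    by (simp add: xi_pow_5)
qed

lemma Im_xi_pow_4_pos: "Im (xi ^ 4) > 0"
  unfolding xi_pow_4 by (simp add: xi_eq_cis sin_gt_zero)

lemma xi_cyclotomic: "xi ^ 4 - xi ^ 3 + xi ^ 2 - xi + 1 = 0"
proof -
  have "(xi + 1) * (xi ^ 4 - xi ^ 3 + xi ^ 2 - xi + 1) = xi ^ 5 + 1"
    by algebra
  moreover have "xi + 1 \<noteq> 0"
  proof
    assume "xi + 1 = 0"
    then have "cos (pi / 5) = -1"
      using complex_eq_iff by (force simp: xi_eq_cis)
    moreover have "cos (pi / 5) > 0"
      by (rule cos_gt_zero) auto
    ultimately show False
      by simp
  qed
  ultimately show ?thesis
    by (simp add: xi_pow_5)
qed

lemma tau_add_tau': "tau + tau' = 1"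
  by (simp add: tau_def tau'_def field_simps)

lemma tau_mult_tau': "tau * tau' = -1"
  by (simp add: tau_def tau'_def field_simps)

lemma tau_squared: "tau ^ 2 = tau + 1"
proof -
  have "tau ^ 2 = tau * (tau + tau') - tau * tau'"
    by algebra
  then show ?thesis
    by (simp add: tau_add_tau' tau_mult_tau')
qed

lemma tau'_squared: "tau' ^ 2 = tau' + 1"
proof -
  have "tau' ^ 2 = tau' * (tau + tau') - tau * tau'"
    by algebra
  then show ?thesis
    by (simp add: tau_add_tau' tau_mult_tau')
qed

lemma tau'_negative: "tau' < 0"
  by (simp add: tau'_def)

lemma xi_minus_xi_pow_4: "xi - xi ^ 4 = complex_of_real tau"
proof -
  define s where "s = 2 * cos (pi / 5)"
  have s: "xi - xi ^ 4 = complex_of_real s"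
    unfolding xi_pow_4 s_def using complex_add_cnj[of xi] by (simp add: xi_eq_cis)
  \<comment> \<open>\<open>s\<close> is a root of \<open>X\<^sup>2 - X - 1 = (X - \<tau>) (X - \<tau>')\<close>, and the positive one.\<close>
  have "complex_of_real (s ^ 2 - s - 1) = (xi - xi ^ 4) ^ 2 - (xi - xi ^ 4) - 1"
    by (simp add: s)
  also have "\<dots> = (xi ^ 4 - xi ^ 3 + xi ^ 2 - xi + 1) + (xi ^ 5 + 1) * (xi ^ 3 - 2)"
    by algebra
  also have "\<dots> = 0"
    by (simp add: xi_cyclotomic xi_pow_5)
  finally have "s ^ 2 - s - 1 = 0"
    by (metis of_real_eq_0_iff)
  moreover have "(s - tau) * (s - tau') = s ^ 2 - s * (tau + tau') + tau * tau'"
    by algebra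
  ultimately have "(s - tau) * (s - tau') = 0"
    by (simp add: tau_add_tau' tau_mult_tau')
  moreover have "s - tau' > 0"
    using cos_gt_zero[of "pi / 5"] tau'_negative by (simp add: s_def)
  ultimately show ?thesis
    using s by simp
qed

lemma xi_pow_7_minus_xi_pow_8: "xi ^ 7 - xi ^ 8 = complex_of_real tau'"
proof -
  have "xi ^ 7 - xi ^ 8
      = 1 - (xi - xi ^ 4) - (xi ^ 4 - xi ^ 3 + xi ^ 2 - xi + 1) - (xi ^ 5 + 1) * (xi ^ 3 - xi ^ 2)"
    by algebra
  also have "\<dots> = complex_of_real (1 - tau)"
    by (simp add: xi_minus_xi_pow_4 xi_cyclotomic xi_pow_5)
  also have "1 - tau = tau'"
    using tau_add_tau' by simp
  finally show ?thesis .
qed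

lemma prime_square_eq_mult_square:
  fixes p a b :: int
  assumes "prime p" and "a ^ 2 = p * b ^ 2"
  shows "b = 0"
proof (rule ccontr)
  assume "b \<noteq> 0"
  then have "a \<noteq> 0"
    using assms by auto
  have p: "prime_elem p"
    using \<open>prime p\<close> by (rule prime_imp_prime_elem)
  \<comment> \<open>The multiplicity of \<open>p\<close> is even on the left and odd on the right.\<close>
  have "2 * multiplicity p a = multiplicity p (a ^ 2)"
    using prime_elem_multiplicity_power_distrib[OF p \<open>a \<noteq> 0\<close>] by simp
  also have "\<dots> = multiplicity p (p * b ^ 2)"
    using assms(2) by simp
  also have "\<dots> = multiplicity p p + multiplicity p (b ^ 2)"
    using p \<open>b \<noteq> 0\<close> by (intro prime_elem_multiplicity_mult_distrib) auto
  also have "\<dots> = 1 + 2 * multiplicity p b"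
    using multiplicity_prime[OF p] prime_elem_multiplicity_power_distrib[OF p \<open>b \<noteq> 0\<close>] by simp
  finally show False
    by presburger
qed

lemma of_int_add_tau_mult_eq_0_iff: "of_int p + tau * of_int q = 0 \<longleftrightarrow> p = 0 \<and> q = 0"
proof
  assume "of_int p + tau * of_int q = 0"
  then have "of_int q * sqrt 5 = - real_of_int (2 * p + q)"
    by (simp add: tau_def field_simps)
  then have "(of_int q * sqrt 5) ^ 2 = (real_of_int (2 * p + q)) ^ 2"
    by (metis power2_minus)
  then have "real_of_int ((2 * p + q) ^ 2) = real_of_int (5 * q ^ 2)"
    by (simp add: power_mult_distrib)
  then have "(2 * p + q) ^ 2 = 5 * q ^ 2"
    by (rule of_int_eq_iff[THEN iffD1])
  then have "q = 0"
    by (rule prime_square_eq_mult_square[rotated]) simp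
  with \<open>of_int p + tau * of_int q = 0\<close> show "p = 0 \<and> q = 0"
    by simp
qed simp

definition lattice_point :: "real \<Rightarrow> complex \<Rightarrow> int \<Rightarrow> int \<Rightarrow> int \<Rightarrow> int \<Rightarrow> complex" where
  "lattice_point t w a b c d =
     complex_of_real (of_int a + t * of_int b) + complex_of_real (of_int c + t * of_int d) * w"

lemma lattice_point_add:
  "lattice_point t w a b c d + lattice_point t w a' b' c' d'
     = lattice_point t w (a + a') (b + b') (c + c') (d + d')"
  by (simp add: lattice_point_def algebra_simps)

lemma of_int_mult_lattice_point:
  "of_int k * lattice_point t w a b c d = lattice_point t w (k * a) (k * b) (k * c) (k * d)"
  by (simp add: lattice_point_def algebra_simps)

lemma lattice_point_one: "lattice_point t w 1 0 0 0 = 1"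
  by (simp add: lattice_point_def)

lemma mult_lattice_point:
  assumes "t ^ 2 = t + 1" and "(complex_of_real t + w) * w = -1"
  shows "(complex_of_real t + w) * lattice_point t w a b c d = lattice_point t w (b - c) (a + b - d) a b"
proof -
  have "complex_of_real t ^ 2 = complex_of_real t + 1"
    by (metis assms(1) of_real_1 of_real_add of_real_power)
  with assms(2) show ?thesis
    unfolding lattice_point_def by simp algebra
qed

lemma lattice_point_tau_xi_inj:
  assumes "lattice_point tau (xi ^ 4) a b c d = lattice_point tau (xi ^ 4) a' b' c' d'"
  shows "a = a' \<and> b = b' \<and> c = c' \<and> d = d'"
proof -
  have "(of_int c + tau * of_int d) * Im (xi ^ 4) = (of_int c' + tau * of_int d') * Im (xi ^ 4)"
    using arg_cong[OF assms, of Im] by (simp add: lattice_point_def)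
  then have "of_int c + tau * of_int d = of_int c' + tau * of_int d'"
    using Im_xi_pow_4_pos by simp
  then have "of_int (c - c') + tau * of_int (d - d') = 0"
    by (simp add: algebra_simps)
  then have cd: "c = c' \<and> d = d'"
    unfolding of_int_add_tau_mult_eq_0_iff by simp
  then have "of_int a + tau * of_int b = of_int a' + tau * of_int b'"
    using arg_cong[OF assms, of Re] by (simp add: lattice_point_def)
  then have "of_int (a - a') + tau * of_int (b - b') = 0"
    by (simp add: algebra_simps)
  with cd show ?thesis
    unfolding of_int_add_tau_mult_eq_0_iff by simp
qed

lemma star_lattice_point: "star (lattice_point tau (xi ^ 4) a b c d) = lattice_point tau' (xi ^ 8) a b c d"
  unfolding star_def lattice_point_def[symmetric]
  by (rule the_equality) (blast, metis lattice_point_tau_xi_inj)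

definition star_graph :: "(complex \<times> complex) set" where
  "star_graph = {(lattice_point tau (xi ^ 4) a b c d, lattice_point tau' (xi ^ 8) a b c d) | a b c d. True}"

lemma star_graphD:
  assumes "(z, z') \<in> star_graph"
  shows "z \<in> M" and "star z = z'"
proof -
  obtain a b c d where z: "z = lattice_point tau (xi ^ 4) a b c d"
    and z': "z' = lattice_point tau' (xi ^ 8) a b c d"
    using assms unfolding star_graph_def by blast
  show "z \<in> M"
    unfolding z M_def lattice_point_def by blast
  show "star z = z'"
    unfolding z z' by (rule star_lattice_point)
qed

lemma star_graph_add:
  assumes "(z, z') \<in> star_graph" and "(u, u') \<in> star_graph"
  shows "(z + u, z' + u') \<in> star_graph"
  using assms unfolding star_graph_def by (clarsimp simp: lattice_point_add) blast

lemma star_graph_of_int_mult: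
  assumes "(z, z') \<in> star_graph"
  shows "(of_int k * z, of_int k * z') \<in> star_graph"
  using assms unfolding star_graph_def by (clarsimp simp: of_int_mult_lattice_point) blast

lemma star_graph_sum:
  assumes "finite A" and "\<And>i. i \<in> A \<Longrightarrow> (f i, g i) \<in> star_graph"
  shows "(\<Sum>i\<in>A. f i, \<Sum>i\<in>A. g i) \<in> star_graph"
  using assms
proof (induction A rule: finite_induct)
  case empty
  have "(lattice_point tau (xi ^ 4) 0 0 0 0, lattice_point tau' (xi ^ 8) 0 0 0 0) \<in> star_graph"
    unfolding star_graph_def by blast
  then show ?case
    by (simp add: lattice_point_def)
next
  case (insert i A)
  then show ?case
    by (simp add: star_graph_add)
qed

lemma star_graph_xi_mult:
  assumes "(z, z') \<in> star_graph"
  shows "(xi * z, xi ^ 7 * z') \<in> star_graph"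
proof -
  obtain a b c d where z: "z = lattice_point tau (xi ^ 4) a b c d"
    and z': "z' = lattice_point tau' (xi ^ 8) a b c d"
    using assms unfolding star_graph_def by blast
  have xi: "complex_of_real tau + xi ^ 4 = xi"
    using xi_minus_xi_pow_4 by (simp add: algebra_simps)
  have xi7: "complex_of_real tau' + xi ^ 8 = xi ^ 7"
    using xi_pow_7_minus_xi_pow_8 by (simp add: algebra_simps)
  have "xi * xi ^ 4 = xi ^ 5" and "xi ^ 7 * xi ^ 8 = (xi ^ 5) ^ 3"
    by algebra+
  then have w: "(complex_of_real tau + xi ^ 4) * xi ^ 4 = -1"
    and w': "(complex_of_real tau' + xi ^ 8) * xi ^ 8 = -1"
    unfolding xi xi7 by (simp_all add: xi_pow_5)
  have "xi * z = lattice_point tau (xi ^ 4) (b - c) (a + b - d) a b"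
    using mult_lattice_point[OF tau_squared w] unfolding z xi .
  moreover have "xi ^ 7 * z' = lattice_point tau' (xi ^ 8) (b - c) (a + b - d) a b"
    using mult_lattice_point[OF tau'_squared w'] unfolding z' xi7 .
  ultimately show ?thesis
    unfolding star_graph_def by blast
qed

lemma star_graph_xi_power: "(xi ^ j, xi ^ (7 * j)) \<in> star_graph"
proof (induction j)
  case 0
  have "(lattice_point tau (xi ^ 4) 1 0 0 0, lattice_point tau' (xi ^ 8) 1 0 0 0) \<in> star_graph"
    unfolding star_graph_def by blast
  then show ?case
    by (simp add: lattice_point_one)
next
  case (Suc j)
  then show ?case
    using star_graph_xi_mult by (simp add: power_add)
qed

lemma convex_sum_le_one_mem:
  fixes S :: "'a::real_vector set"
  assumes "convex S" and "0 \<in> S" and "finite I"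
    and "\<And>i. i \<in> I \<Longrightarrow> 0 \<le> c i" and "sum c I \<le> 1" and "\<And>i. i \<in> I \<Longrightarrow> x i \<in> S"
  shows "(\<Sum>i\<in>I. c i *\<^sub>R x i) \<in> S"
proof (cases "sum c I = 0")
  case True
  then have "\<forall>i\<in>I. c i = 0"
    using assms(3,4) sum_nonneg_eq_0_iff by blast
  then show ?thesis
    using assms(2) by simp
next
  case False
  define s where "s = sum c I"
  have "s > 0"
    using False assms(4) sum_nonneg[of I c] unfolding s_def by fastforce
  \<comment> \<open>Normalise the weights to a convex combination, then shrink it towards \<open>0\<close>.\<close>
  have "(\<Sum>i\<in>I. c i / s) = 1"
    using \<open>s > 0\<close> unfolding s_def by (simp flip: sum_divide_distrib)
  then have y: "(\<Sum>i\<in>I. (c i / s) *\<^sub>R x i) \<in> S"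
    using assms \<open>s > 0\<close> by (intro convex_sum) auto
  have "(\<Sum>i\<in>I. c i *\<^sub>R x i) = s *\<^sub>R (\<Sum>i\<in>I. (c i / s) *\<^sub>R x i) + (1 - s) *\<^sub>R 0"
    using \<open>s > 0\<close> by (simp add: scaleR_sum_right)
  also have "\<dots> \<in> S"
    using convexD[OF assms(1) y assms(2), of s "1 - s"] \<open>s > 0\<close> assms(5) unfolding s_def by simp
  finally show ?thesis .
qed

lemma sum_xi_powers_mem_D:
  fixes m k :: "nat \<Rightarrow> nat"
  assumes "finite I" and "(\<Sum>j\<in>I. m j) \<le> n"
  shows "(\<Sum>j\<in>I. of_nat (m j) * xi ^ k j) \<in> D n"
proof -
  define S where "S = convex hull {of_nat n * xi ^ j | j. j < (10::nat)}"
  have "convex S"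
    unfolding S_def by simp
  have vertex: "of_nat n * xi ^ i \<in> S" for i
  proof -
    have "of_nat n * xi ^ (i mod 10) \<in> S"
      unfolding S_def by (rule hull_inc) auto
    then show ?thesis
      by (simp flip: xi_pow_mod_10)
  qed
  have "(1 / 2) *\<^sub>R (of_nat n * xi ^ 0) + (1 / 2) *\<^sub>R (of_nat n * xi ^ 5) \<in> S"
    by (rule convexD[OF \<open>convex S\<close> vertex vertex]) auto
  then have "0 \<in> S"
    by (simp add: xi_pow_5)
  have "(\<Sum>j\<in>I. of_nat (m j) * xi ^ k j) \<in> S"
  proof (cases "n = 0")
    case True
    then show ?thesis
      using assms \<open>0 \<in> S\<close> by simp
  next
    case False
    have "(\<Sum>j\<in>I. real (m j) / real n) = real (\<Sum>j\<in>I. m j) / real n"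
      by (simp add: sum_divide_distrib)
    also have "\<dots> \<le> 1"
      using assms(2) False by (simp del: of_nat_sum)
    finally have "(\<Sum>j\<in>I. (real (m j) / real n) *\<^sub>R (of_nat n * xi ^ k j)) \<in> S"
      using \<open>convex S\<close> \<open>0 \<in> S\<close> assms(1) vertex by (intro convex_sum_le_one_mem) auto
    also have "(\<Sum>j\<in>I. (real (m j) / real n) *\<^sub>R (of_nat n * xi ^ k j))
        = (\<Sum>j\<in>I. of_nat (m j) * xi ^ k j)"
      using False by (intro sum.cong) (auto simp: scaleR_conv_of_real)
    finally show ?thesis .
  qed
  then show ?thesis
    unfolding D_def S_def using closure_subset by blast
qed

theorem lemma6p16:
  fixes n :: nat
  shows "Q2 n \<subseteq> Sigma_win (D n) \<inter> D n"
proof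
  fix z
  assume "z \<in> Q2 n"
  then obtain m where z: "z = (\<Sum>j<10. of_nat (m j) * xi ^ j)" and m: "(\<Sum>j<10. m j) \<le> n"
    unfolding Q2_def by blast
  define z' where "z' = (\<Sum>j<10. of_nat (m j) * xi ^ (7 * j))"
  have "(of_int (int (m j)) * xi ^ j, of_int (int (m j)) * xi ^ (7 * j)) \<in> star_graph" for j
    by (intro star_graph_of_int_mult star_graph_xi_power)
  then have "(z, z') \<in> star_graph"
    unfolding z z'_def by (intro star_graph_sum) simp_all
  then have "z \<in> M" and "star z = z'"
    by (rule star_graphD)+
  moreover have "z \<in> D n" and "z' \<in> D n"
    unfolding z z'_def using m by (auto intro: sum_xi_powers_mem_D)
  ultimately show "z \<in> Sigma_win (D n) \<inter> D n"
    unfolding Sigma_win_def by simp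
qed

end
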